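(* Let $(\sigma_k)_{k>0}$ be real numbers with $\sigma_k/\ln(k)\to\infty$ as $k\to\infty$, and let $\gamma>0$. Then $$\lim_{k\to\infty}k\int_{\sigma_k}^\infty\exp\Bigl(-2m\Bigl(\gamma-\sqrt{\tfrac{\ln(k)}{m}}\Bigr)^2\Bigr)\,\mathrm dm=0.$$ *)

theory Defs
  imports "HOL-Analysis.Analysis"
begin

end

theory Submission
  imports Defs
begin

text \<open>Once \<open>m \<ge> 4 ln k / \<gamma>\<^sup>2\<close>, we have \<open>sqrt (ln k / m) \<le> \<gamma>/2\<close>, so the integrand is dominated
  by \<open>exp (- \<gamma>\<^sup>2 m / 2)\<close>. Since \<open>\<sigma>\<^sub>k\<close> eventually exceeds \<open>4 ln k / \<gamma>\<^sup>2\<close>, the integral is at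
  most \<open>(2/\<gamma>\<^sup>2) exp (- \<gamma>\<^sup>2 \<sigma>\<^sub>k / 2) \<le> (2/\<gamma>\<^sup>2) exp (-2 ln k) = 2 / (\<gamma>\<^sup>2 k\<^sup>2)\<close>, and multiplying
  by \<open>k\<close> still leaves a null sequence.\<close>

lemma exp_shifted_square_le_exp:
  fixes L m \<gamma> :: real
  assumes "\<gamma> > 0" "L \<ge> 0" "m > 0" "4 * L / \<gamma>\<^sup>2 \<le> m"
  shows "exp (- 2 * m * (\<gamma> - sqrt (L / m))\<^sup>2) \<le> exp (- (\<gamma>\<^sup>2 / 2) * m)"
proof -
  have "L / m \<le> (\<gamma> / 2)\<^sup>2"
    using assms by (simp add: field_simps power_divide)
  then have "sqrt (L / m) \<le> \<gamma> / 2"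
    using assms(1) by (intro real_le_lsqrt) auto
  then have "(\<gamma> / 2)\<^sup>2 \<le> (\<gamma> - sqrt (L / m))\<^sup>2"
    using assms(1) by (intro power_mono) auto
  then have "m * (\<gamma> / 2)\<^sup>2 \<le> m * (\<gamma> - sqrt (L / m))\<^sup>2"
    using assms(3) by (intro mult_left_mono) auto
  then show ?thesis
    by (simp add: power_divide field_simps)
qed

text \<open>No integrability of \<open>f\<close> is needed: otherwise its integral is \<open>0\<close> by convention.\<close>

lemma integral_atLeast_bounded_by_exp:
  fixes f :: "real \<Rightarrow> real" and a c :: real
  assumes "c > 0" and bound: "\<And>m. m \<ge> a \<Longrightarrow> 0 \<le> f m \<and> f m \<le> exp (- c * m)"
  shows "0 \<le> integral {a..} f \<and> integral {a..} f \<le> exp (- c * a) / c"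
proof (cases "f integrable_on {a..}")
  case True
  have exp_int: "((\<lambda>m. exp (- c * m)) has_integral exp (- c * a) / c) {a..}"
    using has_integral_exp_minus_to_infinity[OF assms(1)] by simp
  have "integral {a..} f \<le> exp (- c * a) / c"
    using True exp_int bound by (intro has_integral_le[OF integrable_integral]) auto
  moreover have "0 \<le> integral {a..} f"
    using True bound by (intro integral_nonneg) auto
  ultimately show ?thesis by simp
next
  case False
  then show ?thesis
    using assms(1) by (simp add: not_integrable_integral)
qed

lemma exp_minus_two_ln:
  fixes x :: real
  assumes "x > 0"
  shows "exp (- 2 * ln x) = 1 / x\<^sup>2"
  using assms by (simp add: exp_minus exp_of_nat_mult[of 2, simplified] power2_eq_square
      divide_inverse)

lemma tail_integral_bound:
  fixes x a \<gamma> :: real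
  assumes "\<gamma> > 0" "x \<ge> 1" "a > 0" "4 * ln x / \<gamma>\<^sup>2 \<le> a"
  shows "norm (x * integral {a..} (\<lambda>m. exp (- 2 * m * (\<gamma> - sqrt (ln x / m))\<^sup>2)))
           \<le> (2 / \<gamma>\<^sup>2) / x"
proof -
  define I where "I = integral {a..} (\<lambda>m. exp (- 2 * m * (\<gamma> - sqrt (ln x / m))\<^sup>2))"
  have c_pos: "\<gamma>\<^sup>2 / 2 > 0"
    using assms(1) by simp
  have ln_nonneg: "ln x \<ge> 0"
    using assms(2) by simp
  have I_bounds: "0 \<le> I \<and> I \<le> exp (- (\<gamma>\<^sup>2 / 2) * a) / (\<gamma>\<^sup>2 / 2)"
    unfolding I_def
    using assms(1,3,4) exp_shifted_square_le_exp[OF assms(1) ln_nonneg]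
    by (intro integral_atLeast_bounded_by_exp[OF c_pos]) auto
  have "2 * ln x \<le> \<gamma>\<^sup>2 / 2 * a"
    using assms(1,4) by (simp add: field_simps)
  then have "exp (- (\<gamma>\<^sup>2 / 2) * a) \<le> exp (- 2 * ln x)"
    by simp
  also have "\<dots> = 1 / x\<^sup>2"
    using assms(2) by (intro exp_minus_two_ln) simp
  finally have "exp (- (\<gamma>\<^sup>2 / 2) * a) / (\<gamma>\<^sup>2 / 2) \<le> (1 / x\<^sup>2) / (\<gamma>\<^sup>2 / 2)"
    using c_pos by (intro divide_right_mono) auto
  then have "I \<le> (1 / x\<^sup>2) / (\<gamma>\<^sup>2 / 2)"
    using I_bounds by linarith
  then have "x * I \<le> x * ((1 / x\<^sup>2) / (\<gamma>\<^sup>2 / 2))"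
    using assms(2) by (intro mult_left_mono) auto
  also have "\<dots> = (2 / \<gamma>\<^sup>2) / x"
    using assms(2) by (simp add: power2_eq_square)
  finally have "x * I \<le> (2 / \<gamma>\<^sup>2) / x" .
  then show ?thesis
    using I_bounds assms(2) by (simp add: I_def)
qed

theorem lemmaC4:
  fixes \<sigma> :: "nat \<Rightarrow> real" and \<gamma> :: real
  assumes "filterlim (\<lambda>k. \<sigma> k / ln (real k)) at_top sequentially"
    and "\<gamma> > 0"
  shows "(\<lambda>k. real k * integral {\<sigma> k..}
            (\<lambda>m. exp (- 2 * m * (\<gamma> - sqrt (ln (real k) / m))\<^sup>2)))
         \<longlonglongrightarrow> 0"
proof (rule Lim_null_comparison)
  \<comment> \<open>The margin \<open>+ 1\<close> keeps \<open>\<sigma> k\<close> strictly positive, away from the singularity at \<open>m = 0\<close>.\<close>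
  have "eventually (\<lambda>k. \<sigma> k / ln (real k) \<ge> 4 / \<gamma>\<^sup>2 + 1 \<and> k \<ge> 2) sequentially"
    using assms(1) by (simp add: filterlim_at_top eventually_conj eventually_ge_at_top)
  then show "eventually (\<lambda>k. norm (real k * integral {\<sigma> k..}
            (\<lambda>m. exp (- 2 * m * (\<gamma> - sqrt (ln (real k) / m))\<^sup>2))) \<le> (2 / \<gamma>\<^sup>2) / real k)
            sequentially"
  proof (rule eventually_mono, clarify)
    fix k :: nat
    assume ratio: "4 / \<gamma>\<^sup>2 + 1 \<le> \<sigma> k / ln (real k)" and "k \<ge> 2"
    then have ln_pos: "ln (real k) > 0"
      by simp
    then have "4 * ln (real k) / \<gamma>\<^sup>2 + ln (real k) \<le> \<sigma> k"
      using ratio by (simp add: field_simps)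
    moreover have "0 \<le> 4 * ln (real k) / \<gamma>\<^sup>2"
      using ln_pos by simp
    ultimately have "\<sigma> k > 0" "4 * ln (real k) / \<gamma>\<^sup>2 \<le> \<sigma> k"
      using ln_pos by linarith+
    with \<open>k \<ge> 2\<close> show "norm (real k * integral {\<sigma> k..}
            (\<lambda>m. exp (- 2 * m * (\<gamma> - sqrt (ln (real k) / m))\<^sup>2))) \<le> (2 / \<gamma>\<^sup>2) / real k"
      using tail_integral_bound[OF assms(2)] by simp
  qed
  show "(\<lambda>k. (2 / \<gamma>\<^sup>2) / real k) \<longlonglongrightarrow> 0"
    by (rule lim_const_over_n)
qed

end
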